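(* Let $r\ge1$ be an integer and $N(u)=(1-u^{-1})(1-u^{-2})\cdots(1-u^{-r})$. Then (a) $\zeta_N(s)=\zeta_{\operatorname{GL}(r)/\mathbb F_1}(s+r^2)$; (b) $\zeta_{N^*}(s)=\zeta_{\operatorname{GL}(r)/\mathbb F_1}\big(s+\tfrac{r(r-1)}2\big)^{(-1)^r}$; (c) $\zeta_{\operatorname{GL}(r)/\mathbb F_1}\big(\tfrac{r(3r-1)}2-s\big)=\zeta_{\operatorname{GL}(r)/\mathbb F_1}(s)^{(-1)^r}$.
   Context: For measurable $N:(1,\infty)\to\mathbb C$ let $Z_N(w,s)=\frac1{\Gamma(w)}\int_1^\infty\frac{N(u)}{u^{s+1}}(\log u)^{w-1}du$ (convergent for $\operatorname{Re}(s)$ large and $w$ in an open domain, extended holomorphically to $w=0$), and $\zeta_N(s)=\exp\big(\frac{\partial}{\partial w}Z_N(w,s)\big|_{w=0}\big)$, continued meromorphically in $s$; $N^*(u)=N(1/u)$. $\zeta_{\operatorname{GL}(r)/\mathbb F_1}$ is the Soulé zeta function of the counting polynomial $N_{\operatorname{GL}(r)}(q)=\#\operatorname{GL}_r(\mathbb F_q)=q^{r^2}\prod_{k=1}^r(1-q^{-k})=\sum_k a_kq^k$, i.e. $\zeta_{\operatorname{GL}(r)/\mathbb F_1}(s)=\prod_k(s-k)^{-a_k}$. *)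

theory Defs
  imports "HOL-Analysis.Analysis" "HOL-Computational_Algebra.Polynomial"
begin

definition Z_integrand :: "(real \<Rightarrow> complex) \<Rightarrow> complex \<Rightarrow> complex \<Rightarrow> real \<Rightarrow> complex" where
  "Z_integrand N w s u =
     N u / (complex_of_real u powr (s + 1)) * (complex_of_real (ln u)) powr (w - 1)"

definition Z_convergent :: "(real \<Rightarrow> complex) \<Rightarrow> complex \<Rightarrow> complex \<Rightarrow> bool" where
  "Z_convergent N w s \<longleftrightarrow> set_integrable lborel {1<..} (Z_integrand N w s)"

definition Z_N :: "(real \<Rightarrow> complex) \<Rightarrow> complex \<Rightarrow> complex \<Rightarrow> complex" where
  "Z_N N w s = (LINT u : {1<..} | lborel. Z_integrand N w s u) / Gamma w"

definition Z_extension ::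
  "(real \<Rightarrow> complex) \<Rightarrow> complex \<Rightarrow> (complex \<Rightarrow> complex) \<Rightarrow> complex set \<Rightarrow> bool" where
  "Z_extension N s F D \<longleftrightarrow>
     open D \<and> connected D \<and> 0 \<in> D \<and> {w. Re w > 0} \<subseteq> D \<and> F holomorphic_on D \<and>
     (\<forall>w. Re w > 0 \<longrightarrow> Z_convergent N w s \<and> F w = Z_N N w s)"

definition has_Z_extension :: "(real \<Rightarrow> complex) \<Rightarrow> complex \<Rightarrow> bool" where
  "has_Z_extension N s \<longleftrightarrow> (\<exists>F D. Z_extension N s F D)"

definition zeta_N :: "(real \<Rightarrow> complex) \<Rightarrow> complex \<Rightarrow> complex" where
  "zeta_N N s = exp (deriv (SOME F. \<exists>D. Z_extension N s F D) 0)"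

text \<open>Counting polynomial #GL_r(F_q) = q^(r^2) prod_{k=1..r} (1 - q^(-k))
  = q^(r(r-1)/2) prod_{k=1..r} (q^k - 1).\<close>
definition N_GL :: "nat \<Rightarrow> int poly" where
  "N_GL r = monom 1 (r * (r - 1) div 2) * (\<Prod>k\<in>{1..r}. monom 1 k - 1)"

definition zeta_GL :: "nat \<Rightarrow> complex \<Rightarrow> complex" where
  "zeta_GL r s = (\<Prod>k\<in>{0..degree (N_GL r)}. (s - of_nat k) powi (- coeff (N_GL r) k))"

end

theory Submission
  imports Defs "HOL-Complex_Analysis.Complex_Analysis"
begin

text \<open>For \<open>Re z > 0\<close> and \<open>Re w > 0\<close> the integral of \<open>u powr (-z-1) * ln u powr (w-1)\<close>
  over \<open>(1,\<infinity>)\<close> equals \<open>Gamma w * z powr -w\<close>: for real \<open>z\<close> this is the substitution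
  \<open>u = exp (t / z)\<close> in the Gamma integral, and both sides are holomorphic in \<open>z\<close>.
  Hence if \<open>N\<close> is a finite integral combination \<open>\<Sum> c\<^sub>e u powr e\<close> of powers, then
  \<open>Z_N(w,s) = \<Sum> c\<^sub>e (s - e) powr -w\<close> is entire in \<open>w\<close> and \<open>zeta_N(s) = \<Prod> (s - e) powi -c\<^sub>e\<close>.
  Since \<open>\<Prod>\<^sub>k (1 - u\<^sup>-\<^sup>k) = u powr -r\<^sup>2 * N_GL(u)\<close> and
  \<open>\<Prod>\<^sub>k (1 - u\<^sup>k) = (-1)\<^sup>r * u powr -(r(r-1)/2) * N_GL(u)\<close>, this gives (a) and (b).
  Part (c) is the symmetry \<open>a\<^sub>D\<^sub>-\<^sub>k = (-1)\<^sup>r a\<^sub>k\<close> of the coefficients of \<open>N_GL\<close> around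
  \<open>D = r(3r-1)/2\<close>, coming from the palindromy of each factor \<open>q\<^sup>k - 1\<close>; the signs
  \<open>(-1) powi -a\<^sub>k\<close> it produces cancel because \<open>N_GL(1) = 0\<close>.\<close>

definition log_kernel :: "complex \<Rightarrow> complex \<Rightarrow> real \<Rightarrow> complex" where
  "log_kernel z w u = of_real u powr (- z - 1) * of_real (ln u) powr (w - 1)"

lemma of_real_powr_eq_exp: "a > 0 \<Longrightarrow> complex_of_real a powr b = exp (b * of_real (ln a))"
  by (simp add: powr_def Ln_of_real)

lemma log_kernel_measurable [measurable]: "log_kernel z w \<in> borel_measurable borel"
  unfolding log_kernel_def by measurable

lemma isCont_log_kernel: "u > 1 \<Longrightarrow> isCont (log_kernel z w) u"
  unfolding log_kernel_def by (auto intro!: continuous_intros simp: complex_nonpos_Reals_iff)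

lemma continuous_on_log_kernel: "1 < c \<Longrightarrow> continuous_on {c..d} (log_kernel z w)"
  by (intro continuous_at_imp_continuous_on ballI isCont_log_kernel) auto

lemma norm_log_kernel:
  "u > 1 \<Longrightarrow> norm (log_kernel z w u) = u powr (- Re z - 1) * ln u powr (Re w - 1)"
  unfolding log_kernel_def by (simp add: norm_mult norm_powr_real_powr)

lemma Gamma_integrand_set_integrable_lborel:
  assumes "Re w > 0"
  shows "set_integrable lborel {0<..} (\<lambda>t. complex_of_real t powr (w - 1) / of_real (exp t))"
proof -
  have "set_integrable lebesgue {0<..} (\<lambda>t. complex_of_real t powr (w - 1) / of_real (exp t))"
    using absolutely_integrable_Gamma_integral'[OF assms] .
  then show ?thesis unfolding set_integrable_def
    by (subst (asm) integrable_completion) measurable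
qed

lemma Gamma_integral_Ioi_lborel:
  assumes "Re w > 0"
  shows "(LINT t:{0<..}|lborel. complex_of_real t powr (w - 1) / of_real (exp t)) = Gamma w"
  using set_borel_integral_eq_integral(2)[OF Gamma_integrand_set_integrable_lborel[OF assms]]
    integral_unique[OF Gamma_integral_complex'[OF assms]] by simp

lemma log_kernel_exp_substitution:
  fixes x t :: real
  assumes "x > 0" "t > 0"
  shows "(exp (t / x) / x) *\<^sub>R log_kernel (of_real x) w (exp (t / x)) =
           of_real x powr (- w) * (complex_of_real t powr (w - 1) / of_real (exp t))"
proof -
  have p1: "complex_of_real (exp (t / x)) powr (- of_real x - 1) = exp ((- of_real x - 1) * of_real (t / x))"
    by (subst of_real_powr_eq_exp) auto
  have p2: "complex_of_real (ln (exp (t / x))) powr (w - 1) =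
              exp ((w - 1) * (of_real (ln t) - of_real (ln x)))"
    using assms by (subst of_real_powr_eq_exp) (auto simp: ln_div)
  have p3: "complex_of_real (exp (t / x) / x) = exp (of_real (t / x) - of_real (ln x))"
    using assms by (subst of_real_diff[symmetric], subst exp_of_real, simp add: exp_diff)
  have "(exp (t / x) / x) *\<^sub>R log_kernel (of_real x) w (exp (t / x)) =
          exp (of_real (t / x) - of_real (ln x) + (- of_real x - 1) * of_real (t / x)
               + (w - 1) * (of_real (ln t) - of_real (ln x)))"
    unfolding log_kernel_def scaleR_conv_of_real p1 p2 p3 by (simp add: exp_add)
  also have "\<dots> = exp (- w * of_real (ln x) + ((w - 1) * of_real (ln t) - of_real t))"
    using assms by (intro arg_cong[where f = exp]) (simp add: field_simps)
  also have "\<dots> = of_real x powr (- w) * (complex_of_real t powr (w - 1) / of_real (exp t))"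
    using assms by (simp add: of_real_powr_eq_exp exp_add exp_diff exp_minus field_simps)
                   (metis exp_of_real)
  finally show ?thesis .
qed

lemma log_kernel_exp_substitution_integral:
  fixes x :: real
  assumes x: "x > 0" and w: "Re w > 0"
  shows "set_integrable lborel {0<..} (\<lambda>t. (exp (t / x) / x) *\<^sub>R log_kernel (of_real x) w (exp (t / x)))"
    and "(LINT t:{0<..}|lborel. (exp (t / x) / x) *\<^sub>R log_kernel (of_real x) w (exp (t / x))) =
           of_real x powr (- w) * Gamma w"
proof -
  have eq: "(exp (t / x) / x) *\<^sub>R log_kernel (of_real x) w (exp (t / x)) =
      of_real x powr (- w) * (complex_of_real t powr (w - 1) / of_real (exp t))" if "t \<in> {0<..}" for t
    using log_kernel_exp_substitution[OF x] that by simp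
  show "set_integrable lborel {0<..} (\<lambda>t. (exp (t / x) / x) *\<^sub>R log_kernel (of_real x) w (exp (t / x)))"
    using set_integrable_mult_right[OF Gamma_integrand_set_integrable_lborel[OF w]]
    by (subst set_integrable_cong[OF refl refl eq]) auto
  have "(LINT t:{0<..}|lborel. (exp (t / x) / x) *\<^sub>R log_kernel (of_real x) w (exp (t / x))) =
      (LINT t:{0<..}|lborel. of_real x powr (- w) * (complex_of_real t powr (w - 1) / of_real (exp t)))"
    by (intro set_lebesgue_integral_cong) (auto simp: eq)
  then show "(LINT t:{0<..}|lborel. (exp (t / x) / x) *\<^sub>R log_kernel (of_real x) w (exp (t / x))) =
      of_real x powr (- w) * Gamma w"
    by (simp only: set_integral_mult_right Gamma_integral_Ioi_lborel[OF w])
qed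

lemma log_kernel_of_real:
  fixes x :: real
  assumes x: "x > 0" and w: "Re w > 0"
  shows "set_integrable lborel {1<..} (log_kernel (of_real x) w)"
    and "(LINT u:{1<..}|lborel. log_kernel (of_real x) w u) = Gamma w * of_real x powr (- w)"
proof -
  define g where "g t = exp (t / x)" for t
  define g' where "g' t = exp (t / x) / x" for t
  have einterval_0: "einterval 0 \<infinity> = {0::real<..}"
    by (auto simp: einterval_def zero_ereal_def)
  have einterval_1: "einterval 1 \<infinity> = {1::real<..}"
    by (auto simp: einterval_def one_ereal_def)
  have deriv: "DERIV g t :> g' t" for t
    unfolding g_def g'_def using x by (auto intro!: derivative_eq_intros simp: field_simps)
  have contg': "isCont g' t" for t
    unfolding g'_def using x by (auto intro!: continuous_intros)
  have g'_nonneg: "0 \<le> g' t" for t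
    unfolding g'_def using x by auto
  have g_gt_1: "t > 0 \<Longrightarrow> g t > 1" for t
    unfolding g_def using x by auto
  have lim_0: "((ereal \<circ> g \<circ> real_of_ereal) \<longlongrightarrow> 1) (at_right 0)"
    unfolding zero_ereal_def one_ereal_def ereal_tendsto_simps g_def using x
    by (auto intro!: tendsto_eq_intros)
  have "LIM t at_top. t * (1 / x) :> at_top"
    by (rule filterlim_at_top_mult_tendsto_pos[OF tendsto_const])
       (use x in \<open>auto simp: filterlim_ident\<close>)
  then have lim_inf: "((ereal \<circ> g \<circ> real_of_ereal) \<longlongrightarrow> \<infinity>) (at_left \<infinity>)"
    unfolding ereal_tendsto_simps g_def by (intro filterlim_compose[OF exp_at_top]) simp
  have subst_int: "set_integrable lborel (einterval 0 \<infinity>) (\<lambda>t. g' t *\<^sub>R log_kernel (of_real x) w (g t))"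
    unfolding einterval_0 g_def g'_def by (rule log_kernel_exp_substitution_integral(1)[OF x w])
  have subst_val: "(LBINT t=0..\<infinity>. g' t *\<^sub>R log_kernel (of_real x) w (g t)) = of_real x powr (- w) * Gamma w"
    unfolding interval_lebesgue_integral_def einterval_0 g_def g'_def
    using log_kernel_exp_substitution_integral(2)[OF x w] by simp
  have "set_integrable lborel (einterval 1 \<infinity>) (\<lambda>u. norm (log_kernel (of_real x) w u))"
  proof (rule interval_integral_substitution_nonneg(1)[where g = g and g' = g' and a = 0 and b = \<infinity>])
    show "set_integrable lborel (einterval 0 \<infinity>) (\<lambda>t. norm (log_kernel (of_real x) w (g t)) * g' t)"
      using set_integrable_norm[OF subst_int] g'_nonneg by (simp add: norm_scaleR mult.commute)
  qed (use deriv contg' g'_nonneg lim_0 lim_inf g_gt_1 isCont_log_kernel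
       in \<open>auto intro: continuous_intros simp: zero_ereal_def\<close>)
  then show int: "set_integrable lborel {1<..} (log_kernel (of_real x) w)"
    unfolding einterval_1
    by (rule set_integrable_bound) (auto simp: set_borel_measurable_def)
  have "(LBINT u=1..\<infinity>. log_kernel (of_real x) w u) = (LBINT t=0..\<infinity>. g' t *\<^sub>R log_kernel (of_real x) w (g t))"
    by (rule interval_integral_substitution_integrable[where g = g and g' = g' and a = 0 and b = \<infinity>])
       (use deriv contg' g'_nonneg lim_0 lim_inf g_gt_1 isCont_log_kernel subst_int int
        in \<open>auto simp: zero_ereal_def einterval_1\<close>)
  then show "(LINT u:{1<..}|lborel. log_kernel (of_real x) w u) = Gamma w * of_real x powr (- w)"
    unfolding subst_val by (simp add: interval_lebesgue_integral_def einterval_1 mult.commute)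
qed

lemma log_kernel_set_integrable:
  assumes "Re z > 0" "Re w > 0"
  shows "set_integrable lborel {1<..} (log_kernel z w)"
proof (rule set_integrable_bound[OF log_kernel_of_real(1)[OF assms]])
  show "set_borel_measurable lborel {1<..} (log_kernel z w)"
    unfolding set_borel_measurable_def by measurable
  show "AE u in lborel. u \<in> {1<..} \<longrightarrow> norm (log_kernel z w u) \<le> norm (log_kernel (of_real (Re z)) w u)"
    by (intro AE_I2) (auto simp: norm_log_kernel)
qed

lemma norm_integral_diff_le_integral_diff:
  fixes f :: "real \<Rightarrow> complex" and h :: "real \<Rightarrow> real"
  assumes f: "f integrable_on S" and h: "h integrable_on S"
    and fK: "f integrable_on K" and hK: "h integrable_on K" and "K \<subseteq> S"
    and le: "\<And>x. x \<in> S \<Longrightarrow> norm (f x) \<le> h x"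
  shows "norm (integral S f - integral K f) \<le> integral S h - integral K h"
proof -
  have KS: "K \<inter> S = K" using \<open>K \<subseteq> S\<close> by auto
  have f1: "(\<lambda>x. if x \<in> K then f x else 0) integrable_on S"
    using fK by (simp add: integrable_restrict_Int KS)
  have h1: "(\<lambda>x. if x \<in> K then h x else 0) integrable_on S"
    using hK by (simp add: integrable_restrict_Int KS)
  have "norm (integral S (\<lambda>x. f x - (if x \<in> K then f x else 0)))
          \<le> integral S (\<lambda>x. h x - (if x \<in> K then h x else 0))"
    by (rule integral_norm_bound_integral) (use f f1 h h1 le in \<open>auto intro: integrable_diff\<close>)
  then show ?thesis
    using f f1 h h1 by (simp add: integral_diff integral_restrict_Int KS)
qed

lemma integral_exhausting_intervals_tendsto:
  fixes H :: "real \<Rightarrow> real" and a :: real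
  assumes H: "H integrable_on {a<..}" and HK: "\<And>k. H integrable_on {a + 1 / real (Suc k)..a + real (Suc k)}"
    and nonneg: "\<And>u. u > a \<Longrightarrow> 0 \<le> H u"
  shows "(\<lambda>k. integral {a + 1 / real (Suc k)..a + real (Suc k)} H) \<longlonglongrightarrow> integral {a<..} H"
proof -
  define K where "K k = {a + 1 / real (Suc k)..a + real (Suc k)}" for k :: nat
  have KS: "K k \<inter> {a<..} = K k" for k
    unfolding K_def by (auto intro: less_le_trans[of _ "a + 1 / real (Suc k)"])
  have HK': "H integrable_on K k" for k
    unfolding K_def by (rule HK)
  have "(\<lambda>k. integral {a<..} (\<lambda>u. if u \<in> K k then H u else 0)) \<longlonglongrightarrow> integral {a<..} H"
  proof (rule dominated_convergence(2)[where h = H])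
    fix k show "(\<lambda>u. if u \<in> K k then H u else 0) integrable_on {a<..}"
      by (simp only: integrable_restrict_Int KS HK')
  next
    fix k and u :: real assume "u \<in> {a<..}"
    then show "norm (if u \<in> K k then H u else 0) \<le> H u" using nonneg by auto
  next
    fix u :: real assume u: "u \<in> {a<..}"
    obtain N :: nat where N: "max (1 / (u - a)) (u - a) < real N"
      using reals_Archimedean2 by blast
    have "u \<in> K k" if "N \<le> k" for k
    proof -
      have "1 / (u - a) < Suc k" "u - a \<le> Suc k" using N that by auto
      then have "1 / Suc k < u - a" using u by (simp add: field_simps)
      with \<open>u - a \<le> Suc k\<close> show ?thesis unfolding K_def by auto
    qed
    then have "eventually (\<lambda>k. (if u \<in> K k then H u else 0) = H u) sequentially"
      unfolding eventually_sequentially by auto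
    then show "(\<lambda>k. if u \<in> K k then H u else 0) \<longlonglongrightarrow> H u"
      by (rule tendsto_eventually)
  qed (rule H)
  then have "(\<lambda>k. integral (K k) H) \<longlonglongrightarrow> integral {a<..} H"
    by (simp only: integral_restrict_Int KS)
  then show ?thesis
    unfolding K_def .
qed

lemma holomorphic_on_log_kernel_integral_interval:
  assumes "1 < c"
  shows "(\<lambda>z. integral {c..d} (log_kernel z w)) holomorphic_on UNIV"
  unfolding cbox_interval[symmetric]
proof (rule leibniz_rule_holomorphic[where fx = "\<lambda>z t. - of_real (ln t) * log_kernel z w t"])
  fix z t assume "t \<in> cbox c d"
  then have "t > 1" using assms by auto
  then have "log_kernel z w t = exp ((- z - 1) * of_real (ln t)) * of_real (ln t) powr (w - 1)" for z
    by (simp add: log_kernel_def of_real_powr_eq_exp)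
  then show "((\<lambda>z. log_kernel z w t) has_field_derivative - of_real (ln t) * log_kernel z w t)
               (at z within UNIV)"
    by (auto intro!: derivative_eq_intros)
next
  show "log_kernel z w integrable_on cbox c d" for z
    using continuous_on_log_kernel[OF assms] by (auto intro: integrable_continuous_interval)
  show "continuous_on (UNIV \<times> cbox c d) (\<lambda>(z, t). - complex_of_real (ln t) * log_kernel z w t)"
    unfolding log_kernel_def using assms
    by (auto intro!: continuous_intros simp: case_prod_unfold)
qed auto

lemma uniform_limit_integral_dominated:
  fixes f :: "'z \<Rightarrow> real \<Rightarrow> complex" and H :: "real \<Rightarrow> real"
  assumes f: "\<And>z. z \<in> Z \<Longrightarrow> f z integrable_on S" and fK: "\<And>z k. z \<in> Z \<Longrightarrow> f z integrable_on K k"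
    and H: "H integrable_on S" and HK: "\<And>k. H integrable_on K k" and KS: "\<And>k. K k \<subseteq> S"
    and bound: "\<And>z u. z \<in> Z \<Longrightarrow> u \<in> S \<Longrightarrow> norm (f z u) \<le> H u"
    and lim: "(\<lambda>k. integral (K k) H) \<longlonglongrightarrow> integral S H"
  shows "uniform_limit Z (\<lambda>k z. integral (K k) (f z)) (\<lambda>z. integral S (f z)) sequentially"
  unfolding uniform_limit_iff
proof (intro allI impI)
  fix e :: real assume "e > 0"
  have "(\<lambda>k. integral S H - integral (K k) H) \<longlonglongrightarrow> 0"
    using tendsto_diff[OF tendsto_const[of "integral S H"] lim] by simp
  with \<open>e > 0\<close> have "eventually (\<lambda>k. integral S H - integral (K k) H < e) sequentially"
    by (auto dest: order_tendstoD(2))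
  then show "\<forall>\<^sub>F k in sequentially. \<forall>z\<in>Z. dist (integral (K k) (f z)) (integral S (f z)) < e"
  proof eventually_elim
    case (elim k)
    show ?case
    proof
      fix z assume "z \<in> Z"
      then have "norm (integral S (f z) - integral (K k) (f z)) \<le> integral S H - integral (K k) H"
        by (intro norm_integral_diff_le_integral_diff f fK H HK KS bound)
      with elim show "dist (integral (K k) (f z)) (integral S (f z)) < e"
        by (simp add: dist_norm norm_minus_commute)
    qed
  qed
qed

lemma uniform_limit_log_kernel_integral_intervals:
  assumes w: "Re w > 0" and a: "a > 0"
  shows "uniform_limit {z. Re z \<ge> a} (\<lambda>k z. integral {1 + 1 / real (Suc k)..1 + real (Suc k)} (log_kernel z w))
           (\<lambda>z. integral {1<..} (log_kernel z w)) sequentially"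
proof (rule uniform_limit_integral_dominated)
  define H where "H u = norm (log_kernel (of_real a) w u)" for u
  have K: "1 < 1 + 1 / real (Suc k)" for k
    by simp
  show H: "H integrable_on {1<..}"
    using set_borel_integral_eq_integral(1)[OF set_integrable_norm[OF log_kernel_set_integrable]]
    using a w unfolding H_def by simp
  show HK: "H integrable_on {1 + 1 / real (Suc k)..1 + real (Suc k)}" for k
    unfolding H_def using continuous_on_log_kernel[OF K]
    by (auto intro!: integrable_continuous_interval continuous_intros)
  show "(\<lambda>k. integral {1 + 1 / real (Suc k)..1 + real (Suc k)} H) \<longlonglongrightarrow> integral {1<..} H"
    by (rule integral_exhausting_intervals_tendsto[OF H HK]) (simp add: H_def)
  show "log_kernel z w integrable_on {1 + 1 / real (Suc k)..1 + real (Suc k)}" for z k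
    using continuous_on_log_kernel[OF K] by (auto intro: integrable_continuous_interval)
  show "log_kernel z w integrable_on {1<..}" if "z \<in> {z. Re z \<ge> a}" for z
    using that a set_borel_integral_eq_integral(1)[OF log_kernel_set_integrable[OF _ w]] by simp
  show "{1 + 1 / real (Suc k)..1 + real (Suc k)} \<subseteq> {1<..}" for k
    using less_le_trans[OF K[of k]] by auto
  show "norm (log_kernel z w u) \<le> H u" if "z \<in> {z. Re z \<ge> a}" "u \<in> {1<..}" for z u
  proof -
    have "u powr (- Re z - 1) \<le> u powr (- a - 1)"
      using that by (intro powr_mono) auto
    then show ?thesis
      unfolding H_def using that by (auto simp: norm_log_kernel intro!: mult_right_mono)
  qed
qed

lemma holomorphic_on_log_kernel_integral:
  assumes w: "Re w > 0"
  shows "(\<lambda>z. integral {1<..} (log_kernel z w)) holomorphic_on {z. Re z > 0}"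
proof -
  have "(\<lambda>z. integral {1<..} (log_kernel z w)) field_differentiable at z0" if "Re z0 > 0" for z0
  proof -
    define a where "a = Re z0 / 2"
    have a: "a > 0" using \<open>Re z0 > 0\<close> unfolding a_def by simp
    have "cball z0 a \<subseteq> {z. Re z \<ge> a}"
    proof
      fix z assume "z \<in> cball z0 a"
      then show "z \<in> {z. Re z \<ge> a}"
        using abs_Re_le_cmod[of "z0 - z"] unfolding a_def by (auto simp: dist_norm)
    qed
    then have ulim: "uniform_limit (cball z0 a) (\<lambda>k z. integral {1 + 1 / real (Suc k)..1 + real (Suc k)} (log_kernel z w))
                 (\<lambda>z. integral {1<..} (log_kernel z w)) sequentially"
      by (rule uniform_limit_on_subset[OF uniform_limit_log_kernel_integral_intervals[OF w a]])
    obtain "continuous_on (cball z0 a) (\<lambda>z. integral {1<..} (log_kernel z w))"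
                "(\<lambda>z. integral {1<..} (log_kernel z w)) holomorphic_on ball z0 a"
    proof (rule holomorphic_uniform_limit[OF _ ulim])
      have "1 < 1 + 1 / real (Suc k)" for k
        by simp
      then show "\<forall>\<^sub>F k in sequentially.
          continuous_on (cball z0 a) (\<lambda>z. integral {1 + 1 / real (Suc k)..1 + real (Suc k)} (log_kernel z w)) \<and>
          (\<lambda>z. integral {1 + 1 / real (Suc k)..1 + real (Suc k)} (log_kernel z w)) holomorphic_on ball z0 a"
        by (intro always_eventually allI conjI holomorphic_on_imp_continuous_on
              holomorphic_on_subset[OF holomorphic_on_log_kernel_integral_interval]) auto
    qed auto
    then show ?thesis
      using \<open>Re z0 > 0\<close> unfolding a_def by (intro holomorphic_on_imp_differentiable_at) auto
  qed
  then show ?thesis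
    unfolding holomorphic_on_def by (auto intro: field_differentiable_at_within)
qed

lemma log_kernel_integral:
  assumes z: "Re z > 0" and w: "Re w > 0"
  shows "(LINT u:{1<..}|lborel. log_kernel z w u) = Gamma w * z powr (- w)"
proof -
  have integral_eq: "(LINT u:{1<..}|lborel. log_kernel z w u) = integral {1<..} (log_kernel z w)"
    if "Re z > 0" for z
    using set_borel_integral_eq_integral(2)[OF log_kernel_set_integrable[OF that w]] .
  define f where "f z = integral {1<..} (log_kernel z w) - Gamma w * z powr (- w)" for z
  have "f z = 0"
  proof (rule analytic_continuation[where f = f and S = "{z. Re z > 0}" and U = "of_real ` {0<..}" and \<xi> = 1])
    show "f holomorphic_on {z. Re z > 0}"
      unfolding f_def
      by (intro holomorphic_intros holomorphic_on_log_kernel_integral[OF w])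
         (auto simp: complex_nonpos_Reals_iff)
    show "1 islimpt (complex_of_real ` {0<..})"
      unfolding islimpt_approachable
    proof (intro allI impI)
      fix e :: real assume "e > 0"
      then show "\<exists>x'\<in>complex_of_real ` {0<..}. x' \<noteq> 1 \<and> dist x' 1 < e"
        by (intro bexI[of _ "of_real (1 + e / 2)"] imageI) (auto simp: dist_norm)
    qed
    show "f y = 0" if "y \<in> complex_of_real ` {0<..}" for y
      using that log_kernel_of_real(2)[OF _ w] integral_eq unfolding f_def by auto
  qed (use z in \<open>auto simp: open_halfspace_Re_gt connected_halfspace_Re_gt\<close>)
  then show ?thesis
    using integral_eq[OF z] unfolding f_def by simp
qed

lemma deriv_0_eq_if_eq_on_right_half_plane:
  fixes F1 F2 :: "complex \<Rightarrow> complex"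
  assumes "open D1" "0 \<in> D1" "{w. Re w > 0} \<subseteq> D1" "F1 holomorphic_on D1"
      and "open D2" "0 \<in> D2" "{w. Re w > 0} \<subseteq> D2" "F2 holomorphic_on D2"
      and eq: "\<And>w. Re w > 0 \<Longrightarrow> F1 w = F2 w"
  shows "deriv F1 0 = deriv F2 0"
proof -
  have "open (D1 \<inter> D2)" "0 \<in> D1 \<inter> D2"
    using assms by auto
  then obtain e where e: "e > 0" "ball 0 e \<subseteq> D1 \<inter> D2"
    using open_contains_ball by blast
  define H where "H = {w::complex. Re w > 0}"
  define V where "V = ball 0 e \<union> H"
  have "connected V"
    unfolding V_def H_def
  proof (rule connected_Un)
    show "ball 0 e \<inter> {w. 0 < Re w} \<noteq> {}"
      using e by (intro ex_in_conv[THEN iffD1] exI[of _ "of_real (e / 2)"]) auto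
  qed (auto intro: connected_halfspace_Re_gt)
  moreover have "V \<subseteq> D1" "V \<subseteq> D2"
    unfolding V_def H_def using e assms by auto
  then have "F1 holomorphic_on V" "F2 holomorphic_on V"
    using assms holomorphic_on_subset by blast+
  moreover have "open H" "H \<noteq> {}"
    unfolding H_def by (auto simp: open_halfspace_Re_gt intro!: exI[of _ 1])
  moreover have "open V" "H \<subseteq> V"
    unfolding V_def using \<open>open H\<close> by auto
  ultimately have "F1 w = F2 w" if "w \<in> ball 0 e" for w
    using that eq analytic_continuation_open[of H V F1 F2 w] unfolding H_def V_def by auto
  then have "eventually (\<lambda>w. F1 w = F2 w) (nhds 0)"
    unfolding eventually_nhds using e by (intro exI[of _ "ball 0 e"]) auto
  then show ?thesis
    by (rule deriv_cong_ev) simp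
qed

context
  fixes N :: "real \<Rightarrow> complex" and s :: complex
    and A :: "'i set" and c :: "'i \<Rightarrow> int" and e :: "'i \<Rightarrow> real"
  assumes finite: "finite A"
    and N_eq: "\<And>u. u > 1 \<Longrightarrow> N u = (\<Sum>k\<in>A. of_int (c k) * of_real (u powr e k))"
    and exponents: "\<And>k. k \<in> A \<Longrightarrow> e k < Re s"
begin

lemma Z_integrand_sum_powers:
  assumes "u > 1"
  shows "Z_integrand N w s u = (\<Sum>k\<in>A. of_int (c k) * log_kernel (s - of_real (e k)) w u)"
proof -
  have shift: "of_real (u powr e k) / of_real u powr (s + 1) = of_real u powr (of_real (e k) - s - 1)"
    for k
  proof -
    have "complex_of_real (u powr e k) = exp (of_real (e k) * of_real (ln u))"
      using assms by (simp add: powr_def) (metis exp_of_real of_real_mult)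
    then show ?thesis
      using assms by (simp add: of_real_powr_eq_exp exp_diff[symmetric] algebra_simps)
  qed
  then show ?thesis
    unfolding Z_integrand_def N_eq[OF assms] log_kernel_def sum_divide_distrib sum_distrib_right
    by (intro sum.cong refl) (simp add: shift[symmetric] mult_ac)
qed

lemma Z_extension_sum_powers:
  "Z_extension N s (\<lambda>w. \<Sum>k\<in>A. of_int (c k) * (s - of_real (e k)) powr (- w)) UNIV"
proof -
  define F where "F w = (\<Sum>k\<in>A. of_int (c k) * (s - of_real (e k)) powr (- w))" for w
  have Re_pos: "k \<in> A \<Longrightarrow> Re (s - of_real (e k)) > 0" for k
    using exponents by simp
  have term_int: "set_integrable lborel {1<..} (\<lambda>u. of_int (c k) * log_kernel (s - of_real (e k)) w u)"
    if "k \<in> A" "Re w > 0" for k w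
    using that by (intro set_integrable_mult_right log_kernel_set_integrable Re_pos)
  have sum_int: "set_integrable lborel {1<..}
      (\<lambda>u. \<Sum>k\<in>A. of_int (c k) * log_kernel (s - of_real (e k)) w u)" if "Re w > 0" for w
    unfolding set_integrable_def scaleR_sum_right
    by (intro Bochner_Integration.integrable_sum) (use term_int[OF _ that] in \<open>simp add: set_integrable_def\<close>)
  have "Z_convergent N w s \<and> F w = Z_N N w s" if w: "Re w > 0" for w
  proof
    show "Z_convergent N w s"
      unfolding Z_convergent_def using sum_int[OF w]
      by (subst set_integrable_cong[OF refl refl Z_integrand_sum_powers]) auto
    have "(LINT u:{1<..}|lborel. Z_integrand N w s u) =
          (LINT u:{1<..}|lborel. (\<Sum>k\<in>A. of_int (c k) * log_kernel (s - of_real (e k)) w u))"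
      by (intro set_lebesgue_integral_cong) (auto simp: Z_integrand_sum_powers)
    also have "\<dots> = (\<Sum>k\<in>A. (LINT u:{1<..}|lborel. of_int (c k) * log_kernel (s - of_real (e k)) w u))"
      unfolding set_lebesgue_integral_def scaleR_sum_right
      by (subst Bochner_Integration.integral_sum)
         (auto intro: term_int[OF _ w, unfolded set_integrable_def])
    also have "\<dots> = (\<Sum>k\<in>A. of_int (c k) * (LINT u:{1<..}|lborel. log_kernel (s - of_real (e k)) w u))"
      by (simp only: set_integral_mult_right)
    also have "\<dots> = Gamma w * F w"
      unfolding F_def sum_distrib_left
      by (intro sum.cong refl) (simp add: log_kernel_integral[OF Re_pos w])
    moreover have "Gamma w \<noteq> 0"
      using w by (intro Gamma_nonzero) (auto elim!: nonpos_Ints_cases)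
    ultimately show "F w = Z_N N w s"
      unfolding Z_N_def by simp
  qed
  moreover have "F holomorphic_on UNIV"
    unfolding F_def using Re_pos by (auto intro!: holomorphic_intros)
  ultimately show ?thesis
    unfolding Z_extension_def F_def[symmetric] by auto
qed

lemma has_Z_extension_sum_powers: "has_Z_extension N s"
  using Z_extension_sum_powers unfolding has_Z_extension_def by blast

lemma zeta_N_sum_powers: "zeta_N N s = (\<Prod>k\<in>A. (s - of_real (e k)) powi (- c k))"
proof -
  define b where "b k = s - of_real (e k)" for k
  have b_nz: "k \<in> A \<Longrightarrow> b k \<noteq> 0" for k
    using exponents[of k] unfolding b_def by fastforce
  define F where "F w = (\<Sum>k\<in>A. of_int (c k) * b k powr (- w))" for w
  have ext: "Z_extension N s F UNIV"
    unfolding F_def b_def by (rule Z_extension_sum_powers)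
  have F_exp: "F = (\<lambda>w. \<Sum>k\<in>A. of_int (c k) * exp (- w * Ln (b k)))"
    unfolding F_def using b_nz by (auto simp: powr_def intro!: sum.cong)
  define G where "G = (SOME F. \<exists>D. Z_extension N s F D)"
  obtain D where "Z_extension N s G D"
    using someI_ex[of "\<lambda>F. \<exists>D. Z_extension N s F D"] ext unfolding G_def by blast
  then have "deriv G 0 = deriv F 0"
    using ext unfolding Z_extension_def
    by (intro deriv_0_eq_if_eq_on_right_half_plane[of D _ UNIV]) auto
  also have "deriv F 0 = (\<Sum>k\<in>A. of_int (- c k) * Ln (b k))"
    unfolding F_exp by (rule DERIV_imp_deriv) (auto intro!: derivative_eq_intros sum.cong)
  finally have "zeta_N N s = (\<Prod>k\<in>A. exp (of_int (- c k) * Ln (b k)))"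
    unfolding zeta_N_def G_def[symmetric] using finite by (simp add: exp_sum)
  also have "\<dots> = (\<Prod>k\<in>A. b k powi (- c k))"
    using b_nz by (intro prod.cong refl) (metis exp_Ln exp_power_int)
  finally show ?thesis
    unfolding b_def .
qed

end

lemma map_poly_of_int_mult:
  "map_poly (of_int :: int \<Rightarrow> 'a::comm_ring_1) (p * q) = map_poly of_int p * map_poly of_int q"
  by (rule poly_eqI) (simp add: coeff_map_poly coeff_mult)

lemma map_poly_of_int_diff:
  "map_poly (of_int :: int \<Rightarrow> 'a::comm_ring_1) (p - q) = map_poly of_int p - map_poly of_int q"
  by (rule poly_eqI) (simp add: coeff_map_poly)

lemma map_poly_of_int_prod:
  "map_poly (of_int :: int \<Rightarrow> 'a::comm_ring_1) (\<Prod>k\<in>A. f k) = (\<Prod>k\<in>A. map_poly of_int (f k))"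
  by (induction A rule: infinite_finite_induct) (auto simp: map_poly_of_int_mult)

lemma even_mult_diff_1: "even (r * (r - 1 :: nat))"
  by (cases "even r") auto

lemma triangular_plus_sum_atLeastAtMost: "(r :: nat) * (r - 1) div 2 + (\<Sum>k\<in>{1..r}. k) = r ^ 2"
proof -
  have "2 * (\<Sum>k\<in>{1..r}. k) = r * (r + 1)"
    using gauss_sum_from_Suc_0[of r, where ?'a = nat] by (simp add: even_mult_diff_1)
  moreover have "2 * (r * (r - 1) div 2) = r * (r - 1)"
    using even_mult_diff_1[of r] by simp
  ultimately have "2 * (r * (r - 1) div 2 + (\<Sum>k\<in>{1..r}. k)) = 2 * r ^ 2"
    by (cases r) (simp_all add: algebra_simps power2_eq_square)
  then show ?thesis by simp
qed

lemma degree_monom_1_minus_1: "k \<ge> 1 \<Longrightarrow> degree (monom (1::int) k - 1) = k"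
  by (subst diff_conv_add_uminus, subst degree_add_eq_left) (auto simp: degree_monom_eq)

lemma degree_N_GL: "degree (N_GL r) = r ^ 2"
proof -
  have nz: "monom (1::int) k - 1 \<noteq> 0" if "k \<in> {1..r}" for k
    using degree_monom_1_minus_1[of k] that by (auto simp del: degree_monom_1_minus_1)
  then have "degree (\<Prod>k\<in>{1..r}. monom (1::int) k - 1) = (\<Sum>k\<in>{1..r}. k)"
    by (subst degree_prod_sum_eq) (auto simp: degree_monom_1_minus_1)
  moreover have "(\<Prod>k\<in>{1..r}. monom (1::int) k - 1) \<noteq> 0"
    using nz by simp
  ultimately show ?thesis
    unfolding N_GL_def using triangular_plus_sum_atLeastAtMost[of r]
    by (subst degree_mult_eq) (auto simp: degree_monom_eq)
qed

lemma N_GL_eval: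
  fixes x :: "'a::{comm_ring_1,ring_char_0}"
  shows "(\<Sum>i\<le>r ^ 2. of_int (coeff (N_GL r) i) * x ^ i) =
           x ^ (r * (r - 1) div 2) * (\<Prod>k\<in>{1..r}. x ^ k - 1)"
proof -
  have "degree (map_poly (of_int :: int \<Rightarrow> 'a) (N_GL r)) = r ^ 2"
    by (subst degree_map_poly) (auto simp: degree_N_GL)
  moreover have "poly (map_poly (of_int :: int \<Rightarrow> 'a) (N_GL r)) x =
      x ^ (r * (r - 1) div 2) * (\<Prod>k\<in>{1..r}. x ^ k - 1)"
    unfolding N_GL_def map_poly_of_int_mult map_poly_of_int_prod map_poly_of_int_diff
    by (simp add: map_poly_monom poly_prod poly_monom)
  ultimately show ?thesis
    unfolding poly_altdef by (simp add: coeff_map_poly)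
qed

lemma sum_coeff_N_GL:
  assumes "r \<ge> 1"
  shows "(\<Sum>i\<le>r ^ 2. coeff (N_GL r) i) = 0"
  using N_GL_eval[of r "1::int"] assms by simp

lemma coeff_N_GL_reflect:
  assumes "j \<le> r ^ 2 + r * (r - 1) div 2"
  shows "coeff (N_GL r) (r ^ 2 + r * (r - 1) div 2 - j) = (-1) ^ r * coeff (N_GL r) j"
proof -
  define m where "m = r * (r - 1) div 2"
  define Q where "Q = (\<Prod>k\<in>{1..r}. monom (1::int) k - 1)"
  have coeff_N_GL: "coeff (N_GL r) k = (if k < m then 0 else coeff Q (k - m))" for k
    unfolding N_GL_def Q_def m_def coeff_monom_mult by simp
  have "reflect_poly (monom (1::int) k - 1) = (-1) * (monom 1 k - 1)" if "k \<ge> 1" for k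
    by (rule poly_eqI) (use that in \<open>auto simp: coeff_reflect_poly degree_monom_1_minus_1 coeff_monom\<close>)
  then have "reflect_poly Q = (\<Prod>k\<in>{1..r}. (-1) * (monom (1::int) k - 1))"
    unfolding Q_def reflect_poly_prod by (intro prod.cong) auto
  also have "\<dots> = (-1) ^ r * Q"
    unfolding Q_def by (subst prod.distrib) simp
  also have "((-1) :: int poly) ^ r = [:(-1) ^ r:]"
    by (induction r) auto
  finally have reflect_Q: "reflect_poly Q = [:(-1) ^ r:] * Q" .
  have "reflect_poly (monom (1::int) m) = 1"
    by (rule poly_eqI) (auto simp: coeff_reflect_poly degree_monom_eq coeff_monom)
  then have "reflect_poly (N_GL r) = [:(-1) ^ r:] * Q"
    unfolding N_GL_def m_def[symmetric] Q_def[symmetric] reflect_poly_mult reflect_Q by simp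
  then have reflect: "coeff (N_GL r) (r ^ 2 - n) = (-1) ^ r * coeff Q n" if "n \<le> r ^ 2" for n
    using that coeff_reflect_poly[of "N_GL r" n] by (simp add: degree_N_GL)
  show ?thesis
  proof (cases "j < m")
    case True
    then have "coeff (N_GL r) (r ^ 2 + m - j) = 0"
      by (intro coeff_eq_0) (simp add: degree_N_GL)
    then show ?thesis using True coeff_N_GL[of j] unfolding m_def by simp
  next
    case False
    then have "r ^ 2 + m - j = r ^ 2 - (j - m)" "j - m \<le> r ^ 2"
      using assms unfolding m_def by auto
    then show ?thesis using reflect[of "j - m"] coeff_N_GL[of j] False unfolding m_def by simp
  qed
qed

lemma power_int_prod:
  "finite A \<Longrightarrow> (\<Prod>k\<in>A. f k) powi n = (\<Prod>k\<in>A. (f k :: 'a::field) powi n)"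
  by (induction A rule: finite_induct) (auto simp: power_int_mult_distrib)

lemma prod_power_int_sum:
  "(x :: 'a::field) \<noteq> 0 \<Longrightarrow> (\<Prod>j\<in>A. x powi e j) = x powi (\<Sum>j\<in>A. e j)"
  by (induction A rule: infinite_finite_induct) (auto simp: power_int_add)

lemma zeta_GL_eq_prod:
  assumes "r ^ 2 \<le> D"
  shows "zeta_GL r z = (\<Prod>k\<in>{0..D}. (z - of_nat k) powi (- coeff (N_GL r) k))"
  unfolding zeta_GL_def degree_N_GL
  by (rule prod.mono_neutral_left) (use assms in \<open>auto simp: coeff_eq_0 degree_N_GL\<close>)

text \<open>No hypothesis on \<open>s\<close> is needed: at the integers where some factor vanishes, both
  sides are evaluated with the same convention \<open>0 powi n = 0\<close> for \<open>n \<noteq> 0\<close>.\<close>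
lemma zeta_GL_functional_equation:
  assumes "r \<ge> 1"
  shows "zeta_GL r (of_nat (r * (3 * r - 1) div 2) - s) = zeta_GL r s powi ((-1) ^ r)"
proof -
  define D where "D = r ^ 2 + r * (r - 1) div 2"
  define a where "a = coeff (N_GL r)"
  have "r * (3 * r - 1) = 2 * r ^ 2 + r * (r - 1)"
    by (cases r) (simp_all add: algebra_simps power2_eq_square)
  then have D_eq: "r * (3 * r - 1) div 2 = D"
    unfolding D_def using even_mult_diff_1[of r] by auto
  have "r ^ 2 \<le> D"
    unfolding D_def by simp
  have "(\<Sum>j\<in>{0..D}. a j) = (\<Sum>j\<le>r ^ 2. a j)"
    using \<open>r ^ 2 \<le> D\<close> unfolding atLeast0AtMost
    by (intro sum.mono_neutral_right) (auto simp: a_def coeff_eq_0 degree_N_GL)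
  then have "(\<Sum>j\<in>{0..D}. - ((-1) ^ r * a j)) = 0"
    using sum_coeff_N_GL[OF assms] by (simp add: a_def sum_negf sum_distrib_left[symmetric])
  then have signs: "(\<Prod>j\<in>{0..D}. (-1::complex) powi (- ((-1) ^ r * a j))) = 1"
    by (subst prod_power_int_sum) auto
  have "zeta_GL r (of_nat D - s) = (\<Prod>k\<in>{0..D}. (of_nat D - s - of_nat k) powi (- a k))"
    unfolding a_def by (rule zeta_GL_eq_prod[OF \<open>r ^ 2 \<le> D\<close>])
  also have "\<dots> = (\<Prod>j\<in>{0..D}. (of_nat D - s - of_nat (D - j)) powi (- a (D - j)))"
    by (subst prod.atLeastAtMost_rev) simp
  also have "\<dots> = (\<Prod>j\<in>{0..D}. ((-1) * (s - of_nat j)) powi (- ((-1) ^ r * a j)))"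
    using coeff_N_GL_reflect[of _ r] unfolding a_def D_def
    by (intro prod.cong refl) (auto simp: of_nat_diff)
  also have "\<dots> = (\<Prod>j\<in>{0..D}. (s - of_nat j) powi (- a j)) powi ((-1) ^ r)"
    by (simp only: power_int_mult_distrib prod.distrib signs power_int_prod[OF finite_atLeastAtMost])
       (auto simp: power_int_mult[symmetric] mult.commute intro!: prod.cong)
  also have "\<dots> = zeta_GL r s powi ((-1) ^ r)"
    unfolding a_def by (subst zeta_GL_eq_prod[OF \<open>r ^ 2 \<le> D\<close>]) simp
  finally show ?thesis
    unfolding D_eq .
qed

lemma zeta_N_scaled_N_GL:
  fixes t :: nat and \<epsilon> :: int and f :: "real \<Rightarrow> real"
  assumes f: "\<And>u. u > 1 \<Longrightarrow>
      f u = of_int \<epsilon> * u powr (- real t) * (\<Sum>i\<le>r ^ 2. of_int (coeff (N_GL r) i) * u ^ i)"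
    and s: "Re s > real (r ^ 2) - real t"
  defines "N \<equiv> \<lambda>u. complex_of_real (f u)"
  shows "has_Z_extension N s" "zeta_N N s = zeta_GL r (s + of_nat t) powi \<epsilon>"
proof -
  define a where "a = coeff (N_GL r)"
  have N_eq: "N u = (\<Sum>i\<le>r ^ 2. of_int (\<epsilon> * a i) * of_real (u powr (real i - real t)))"
    if "u > 1" for u
    using that unfolding N_def f[OF that] a_def
    by (simp add: sum_distrib_left powr_diff powr_realpow mult_ac divide_inverse powr_minus)
  have exponents: "real i - real t < Re s" if "i \<in> {..r ^ 2}" for i
    using that s by (simp del: of_nat_power add: of_nat_power[symmetric])
  show "has_Z_extension N s"
    by (rule has_Z_extension_sum_powers[OF _ N_eq exponents]) auto
  have "zeta_N N s = (\<Prod>i\<le>r ^ 2. (s - of_real (real i - real t)) powi (- (\<epsilon> * a i)))"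
    by (rule zeta_N_sum_powers[OF _ N_eq exponents]) auto
  also have "\<dots> = (\<Prod>i\<le>r ^ 2. (s + of_nat t - of_nat i) powi (- a i)) powi \<epsilon>"
    by (subst power_int_prod) (auto simp: power_int_mult[symmetric] algebra_simps intro!: prod.cong)
  also have "\<dots> = zeta_GL r (s + of_nat t) powi \<epsilon>"
    unfolding zeta_GL_def degree_N_GL a_def atLeast0AtMost ..
  finally show "zeta_N N s = zeta_GL r (s + of_nat t) powi \<epsilon>" .
qed

lemma prod_one_minus_inverse_powers:
  fixes u :: real
  assumes "u > 0"
  shows "(\<Prod>k\<in>{1..r}. 1 - 1 / u ^ k) =
           u powr (- real (r ^ 2)) * (\<Sum>i\<le>r ^ 2. of_int (coeff (N_GL r) i) * u ^ i)"
proof -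
  define m where "m = r * (r - 1) div 2"
  have "(\<Prod>k\<in>{1..r}. 1 - 1 / u ^ k) = (\<Prod>k\<in>{1..r}. u ^ k - 1) / u ^ (\<Sum>k\<in>{1..r}. k)"
    using assms by (simp add: prod_dividef power_sum field_simps)
  also have "\<dots> = u ^ m * (\<Prod>k\<in>{1..r}. u ^ k - 1) / u ^ (m + (\<Sum>k\<in>{1..r}. k))"
    using assms by (simp add: power_add)
  also have "m + (\<Sum>k\<in>{1..r}. k) = r ^ 2"
    unfolding m_def by (rule triangular_plus_sum_atLeastAtMost)
  finally have "(\<Prod>k\<in>{1..r}. 1 - 1 / u ^ k) = u ^ m * (\<Prod>k\<in>{1..r}. u ^ k - 1) / u ^ (r ^ 2)" .
  moreover have "u powr (- real (r ^ 2)) = 1 / u ^ (r ^ 2)"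
    using assms by (simp add: powr_minus_divide powr_realpow del: of_nat_power)
  ultimately show ?thesis
    unfolding N_GL_eval m_def by simp
qed

lemma prod_one_minus_powers:
  fixes u :: real
  assumes "u > 0"
  shows "(\<Prod>k\<in>{1..r}. 1 - 1 / (1 / u) ^ k) =
           (-1) ^ r * u powr (- real (r * (r - 1) div 2)) * (\<Sum>i\<le>r ^ 2. of_int (coeff (N_GL r) i) * u ^ i)"
proof -
  have "(\<Prod>k\<in>{1..r}. 1 - 1 / (1 / u) ^ k) = (\<Prod>k\<in>{1..r}. (-1) * (u ^ k - 1))"
    by (simp add: power_one_over)
  also have "\<dots> = (-1) ^ r * (\<Prod>k\<in>{1..r}. u ^ k - 1)"
    by (subst prod.distrib) simp
  finally show ?thesis
    using assms unfolding N_GL_eval by (simp add: powr_minus powr_realpow)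
qed

lemma zeta_N_prod_one_minus_inverse_powers:
  assumes "Re s > 0"
  shows "has_Z_extension (\<lambda>u. complex_of_real (\<Prod>k\<in>{1..r}. 1 - 1 / u ^ k)) s"
    and "zeta_N (\<lambda>u. complex_of_real (\<Prod>k\<in>{1..r}. 1 - 1 / u ^ k)) s = zeta_GL r (s + of_nat (r ^ 2))"
proof -
  have f: "(\<Prod>k\<in>{1..r}. 1 - 1 / u ^ k) =
      of_int 1 * u powr (- real (r ^ 2)) * (\<Sum>i\<le>r ^ 2. of_int (coeff (N_GL r) i) * u ^ i)"
    if "u > 1" for u :: real
    using that by (subst prod_one_minus_inverse_powers) auto
  have s: "Re s > real (r ^ 2) - real (r ^ 2)"
    using assms by simp
  show "has_Z_extension (\<lambda>u. complex_of_real (\<Prod>k\<in>{1..r}. 1 - 1 / u ^ k)) s"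
    by (rule zeta_N_scaled_N_GL(1)[OF f s])
  show "zeta_N (\<lambda>u. complex_of_real (\<Prod>k\<in>{1..r}. 1 - 1 / u ^ k)) s = zeta_GL r (s + of_nat (r ^ 2))"
    using zeta_N_scaled_N_GL(2)[OF f s] by (simp only: power_int_1_right)
qed

lemma zeta_N_prod_one_minus_powers:
  assumes "Re s > real (r ^ 2)"
  shows "has_Z_extension (\<lambda>u. complex_of_real (\<Prod>k\<in>{1..r}. 1 - 1 / (1 / u) ^ k)) s"
    and "zeta_N (\<lambda>u. complex_of_real (\<Prod>k\<in>{1..r}. 1 - 1 / (1 / u) ^ k)) s =
           zeta_GL r (s + of_nat (r * (r - 1) div 2)) powi ((-1) ^ r)"
proof -
  have f: "(\<Prod>k\<in>{1..r}. 1 - 1 / (1 / u) ^ k) = of_int ((-1) ^ r) * u powr (- real (r * (r - 1) div 2)) *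
      (\<Sum>i\<le>r ^ 2. of_int (coeff (N_GL r) i) * u ^ i)"
    if "u > 1" for u :: real
    using that by (subst prod_one_minus_powers) auto
  have s: "Re s > real (r ^ 2) - real (r * (r - 1) div 2)"
    using assms by simp
  show "has_Z_extension (\<lambda>u. complex_of_real (\<Prod>k\<in>{1..r}. 1 - 1 / (1 / u) ^ k)) s"
    by (rule zeta_N_scaled_N_GL(1)[OF f s])
  show "zeta_N (\<lambda>u. complex_of_real (\<Prod>k\<in>{1..r}. 1 - 1 / (1 / u) ^ k)) s =
      zeta_GL r (s + of_nat (r * (r - 1) div 2)) powi ((-1) ^ r)"
    by (rule zeta_N_scaled_N_GL(2)[OF f s])
qed

theorem proposition3p9:
  fixes r :: nat
  assumes "r \<ge> 1"
  shows "(\<exists>\<sigma>::real. \<forall>s::complex. Re s > \<sigma> \<longrightarrow>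
            has_Z_extension (\<lambda>u. complex_of_real (\<Prod>k\<in>{1..r}. 1 - 1 / u ^ k)) s \<and>
            zeta_N (\<lambda>u. complex_of_real (\<Prod>k\<in>{1..r}. 1 - 1 / u ^ k)) s
              = zeta_GL r (s + of_nat (r ^ 2)))
       \<and> (\<exists>\<sigma>::real. \<forall>s::complex. Re s > \<sigma> \<longrightarrow>
            has_Z_extension (\<lambda>u. complex_of_real (\<Prod>k\<in>{1..r}. 1 - 1 / (1 / u) ^ k)) s \<and>
            zeta_N (\<lambda>u. complex_of_real (\<Prod>k\<in>{1..r}. 1 - 1 / (1 / u) ^ k)) s
              = zeta_GL r (s + of_nat (r * (r - 1) div 2)) powi ((-1) ^ r))
       \<and> (\<forall>s::complex. s \<notin> \<int> \<longrightarrow>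
            zeta_GL r (of_nat (r * (3 * r - 1) div 2) - s) = zeta_GL r s powi ((-1) ^ r))"
  using zeta_N_prod_one_minus_inverse_powers zeta_N_prod_one_minus_powers
    zeta_GL_functional_equation[OF assms] by blast

end
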